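(* Under the hypotheses of Proposition 1 (closed-loop scheme of the setting below, $\mathcal P_i(t)$ feasible for all $t$, $\ell_i^{\mathrm c}$ continuous with $\underline\alpha(\|(e,\delta u)\|)\le\ell_i^{\mathrm c}(e,\delta u)\le\overline\alpha(\|(e,\delta u)\|)$ for class-$\mathcal K_\infty$ functions $\underline\alpha,\overline\alpha$, and $V_i^{\mathrm c}\ge0$), suppose in addition that there exist $\bar t\in\mathbb Z_+$ and a pair $(\bar x_i^{\mathrm c,\star},\bar u_i^{\mathrm c,\star})$ such that $\bar x^{\mathrm c,\ast}_i(t)=\bar x_i^{\mathrm c,\star}$ and $\bar u^{\mathrm c,\ast}_i(t)=\bar u_i^{\mathrm c,\star}$ for all $t\ge\bar t$. Then $x_i(t)\to\bar x_i^{\mathrm c,\star}$ and $u_i(t)\to\bar u_i^{\mathrm c,\star}$ as $t\to\infty$.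
   Context: A function $\alpha:\mathbb R_+\to\mathbb R_+$ is of class $\mathcal K_\infty$ if it is continuous, strictly increasing, $\alpha(0)=0$ and $\alpha(s)\to\infty$ as $s\to\infty$. Setting. Agents $\mathcal I=\{1,\dots,M\}$. Agent $i$ has dynamics $x_i(t+1)=f_i(x_i(t),u_i(t))$, $x_i\in\mathbb R^{n_i}$, $u_i\in\mathbb R^{m_i}$, admissible sets $\mathcal X_i\subset\mathbb R^{n_i}$, $\mathcal U_i\subset\mathbb R^{m_i}$, position $p_i=C_ix_i\in\mathbb R^{n_p}$, body radius $r_i>0$, body $\mathcal B_i(t)=\mathbb B(p_i(t),r_i)$ (closed Euclidean ball), reference state $x_i^{\mathrm{ref}}$. A deterministic safe-set generator $\Gamma_i$ assigns to each $x\in\mathcal X_i$ a ball $\Gamma_i(x)=\mathbb B(c_i(x),R_i(x))$. The active safe set at time $t$ is $S_i^\ast(t)=\mathbb B(c_i(t),R_i(t))$. $h:\mathbb R^{n_p}\to\mathbb R$ is a continuous obstacle function. Horizons $N_{\mathrm n},N_{\mathrm c}\in\mathbb Z_{>0}$. Costs: nominal stage and terminal costs $\ell_i^{\mathrm n},V_i^{\mathrm n}$, nonnegative offset cost $V_i^{\mathrm c}$, nonnegative contingency stage cost $\ell_i^{\mathrm c}$, weight $\gamma>0$. Problem $\mathcal P_i(t)$ (given $x_i(t)$, $S_i^\ast(t)$ and a bound $\hat J_i^{\mathrm c}(t)\ge0$): decision variables $x^{\mathrm n}_{i,(k|t)}$ ($k=0..N_{\mathrm n}$), $u^{\mathrm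 n}_{i,(k|t)}$ ($k=0..N_{\mathrm n}-1$), $x^{\mathrm c}_{i,(k|t)}$ ($k=0..N_{\mathrm c}$), $u^{\mathrm c}_{i,(k|t)}$ ($k=0..N_{\mathrm c}-1$), $\bar x^{\mathrm c}_i(t),\bar u^{\mathrm c}_i(t)$; write $p^\bullet_{i,(k|t)}=C_ix^\bullet_{i,(k|t)}$. Minimize $J_i=\sum_{k=0}^{N_{\mathrm n}-1}\ell_i^{\mathrm n}(x^{\mathrm n}_{i,(k|t)},u^{\mathrm n}_{i,(k|t)})+V_i^{\mathrm n}(x^{\mathrm n}_{i,(N_{\mathrm n}|t)},x_i^{\mathrm{ref}})+\gamma V_i^{\mathrm c}(\bar x^{\mathrm c}_i(t),x_i^{\mathrm{ref}})$ subject to: (N1) $x^{\mathrm n}_{i,(0|t)}=x_i(t)$; (N2) $u^{\mathrm n}_{i,(0|t)}=u^{\mathrm c}_{i,(0|t)}$; (N3) $x^{\mathrm n}_{i,(k+1|t)}=f_i(x^{\mathrm n}_{i,(k|t)},u^{\mathrm n}_{i,(k|t)})$, $x^{\mathrm n}_{i,(k+1|t)}\in\mathcal X_i$, $u^{\mathrm n}_{i,(k|t)}\in\mathcal U_i$ for $k=0..N_{\mathrm n}-1$; (C1) $x^{\mathrm c}_{i,(0|t)}=x_i(t)$; (C2) $x^{\mathrm c}_{i,(k+1|t)}=f_i(x^{\mathrm c}_{i,(k|t)},u^{\mathrm c}_{i,(k|t)})$ for $k=0..N_{\mathrm c}-1$; (C3) $x^{\mathrm c}_{i,(k+1|t)}\in\mathcal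 X_i$, $u^{\mathrm c}_{i,(k|t)}\in\mathcal U_i$ for $k=0..N_{\mathrm c}-1$; (C4) $h(p^{\mathrm c}_{i,(k|t)})\ge0$ for $k=0..N_{\mathrm c}$; (C5) $x^{\mathrm c}_{i,(N_{\mathrm c}|t)}=\bar x^{\mathrm c}_i(t)$, $\bar x^{\mathrm c}_i(t)=f_i(\bar x^{\mathrm c}_i(t),\bar u^{\mathrm c}_i(t))$, $(\bar x^{\mathrm c}_i(t),\bar u^{\mathrm c}_i(t))\in\mathcal X_i\times\mathcal U_i$; (C6) $C_i\bar x^{\mathrm c}_i(t)\in S_i^\ast(t)$; (C7) $\|p^{\mathrm c}_{i,(k|t)}-c_i(t)\|\le R_i(t)-r_i$ for $k=0..N_{\mathrm c}$; (C8) $\|p^{\mathrm c}_{i,(l|t)}-c_i(x^{\mathrm c}_{i,(k|t)})\|\le R_i(x^{\mathrm c}_{i,(k|t)})-r_i$ for all $0\le k\le l\le N_{\mathrm c}$; (L) $J_i^{\mathrm c}(t)\le\hat J_i^{\mathrm c}(t)$, where $J_i^{\mathrm c}(t):=\sum_{k=0}^{N_{\mathrm c}-1}\ell_i^{\mathrm c}(x^{\mathrm c}_{i,(k|t)}-\bar x^{\mathrm c}_i(t),u^{\mathrm c}_{i,(k|t)}-\bar u^{\mathrm c}_i(t))+V_i^{\mathrm c}(\bar x^{\mathrm c}_i(t),x_i^{\mathrm{ref}})$. Closed loop: at each $t$ each agent solves $\mathcal P_i(t)$, a star denotes the optimal solution, $J_i^{\mathrm c,\ast}(t)$ is $J_i^{\mathrm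 c}$ evaluated at it, the input $u_i(t)=u^{\mathrm c,\ast}_{i,(0|t)}=u^{\mathrm n,\ast}_{i,(0|t)}$ is applied and the state evolves exactly by $x_i(t+1)=f_i(x_i(t),u_i(t))$. Bound update: $\hat J_i^{\mathrm c}(t+1):=J_i^{\mathrm c,\ast}(t)-\ell_i^{\mathrm c}(x_i(t)-\bar x^{\mathrm c,\ast}_i(t),u_i(t)-\bar u^{\mathrm c,\ast}_i(t))$. Freeze-or-shift (FoS) update: $\tilde S_i(t+1):=\Gamma_i(x_i(t+1))$; $\chi_i(t)=1$ if some $j\neq i$ has $\tilde S_i(t+1)\cap\tilde S_j(t+1)\neq\emptyset$ or $\tilde S_i(t+1)\cap S_j^\ast(t)\neq\emptyset$, else $\chi_i(t)=0$; $S_i^\ast(t+1)=S_i^\ast(t)$ if $\chi_i(t)=1$ and $S_i^\ast(t+1)=\tilde S_i(t+1)$ if $\chi_i(t)=0$. *)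

theory Defs
  imports "HOL-Analysis.Analysis"
begin

definition class_Kinf :: "(real \<Rightarrow> real) \<Rightarrow> bool" where
  "class_Kinf \<alpha> \<longleftrightarrow> continuous_on {0..} \<alpha> \<and> strict_mono_on {0..} \<alpha> \<and> \<alpha> 0 = 0
     \<and> filterlim \<alpha> at_top at_top"

text \<open>Data of one agent: dynamics f, admissible sets X and U, position map C, body radius r,
  reference state, safe-set generator Gamma (centre and radius), nominal stage/terminal costs,
  offset cost V^c and contingency stage cost l^c.\<close>
record ('x, 'u, 'p) agent_data =
  ag_f :: "'x \<Rightarrow> 'u \<Rightarrow> 'x"
  ag_X :: "'x set"
  ag_U :: "'u set"
  ag_C :: "'x \<Rightarrow> 'p"
  ag_r :: real
  ag_xref :: 'x
  ag_Gc :: "'x \<Rightarrow> 'p"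
  ag_GR :: "'x \<Rightarrow> real"
  ag_ln :: "'x \<Rightarrow> 'u \<Rightarrow> real"
  ag_Vn :: "'x \<Rightarrow> 'x \<Rightarrow> real"
  ag_Vc :: "'x \<Rightarrow> 'x \<Rightarrow> real"
  ag_lc :: "'x \<Rightarrow> 'u \<Rightarrow> real"

text \<open>Decision variables of problem P_i(t) (only indices within the horizons matter).\<close>
record ('x, 'u) mpc_sol =
  s_xn :: "nat \<Rightarrow> 'x"
  s_un :: "nat \<Rightarrow> 'u"
  s_xc :: "nat \<Rightarrow> 'x"
  s_uc :: "nat \<Rightarrow> 'u"
  s_xb :: 'x
  s_ub :: 'u

definition standing_assumptions ::
  "nat \<Rightarrow> (nat \<Rightarrow> ('x::real_normed_vector, 'u::real_normed_vector, 'p::euclidean_space) agent_data)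
   \<Rightarrow> ('p \<Rightarrow> real) \<Rightarrow> nat \<Rightarrow> nat \<Rightarrow> real \<Rightarrow> bool" where
  "standing_assumptions M ag h Nn Nc \<gamma> \<longleftrightarrow>
     continuous_on UNIV h \<and> 0 < Nn \<and> 0 < Nc \<and> 0 < \<gamma> \<and>
     (\<forall>j\<in>{1..M}. 0 < ag_r (ag j) \<and> linear (ag_C (ag j)) \<and>
        (\<forall>a b. 0 \<le> ag_Vc (ag j) a b) \<and> (\<forall>e v. 0 \<le> ag_lc (ag j) e v))"

definition Jc_cost :: "('x::real_normed_vector, 'u::real_normed_vector, 'p) agent_data \<Rightarrow> nat
    \<Rightarrow> ('x, 'u) mpc_sol \<Rightarrow> real" where
  "Jc_cost A Nc s = (\<Sum>k<Nc. ag_lc A (s_xc s k - s_xb s) (s_uc s k - s_ub s))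
      + ag_Vc A (s_xb s) (ag_xref A)"

definition J_cost :: "('x, 'u, 'p) agent_data \<Rightarrow> nat \<Rightarrow> real \<Rightarrow> ('x, 'u) mpc_sol \<Rightarrow> real" where
  "J_cost A Nn \<gamma> s = (\<Sum>k<Nn. ag_ln A (s_xn s k) (s_un s k))
      + ag_Vn A (s_xn s Nn) (ag_xref A) + \<gamma> * ag_Vc A (s_xb s) (ag_xref A)"

text \<open>Feasibility for P_i(t) given state x, active safe set cball c R, and bound Jhat.\<close>
definition feasible ::
  "('x::real_normed_vector, 'u::real_normed_vector, 'p::real_normed_vector) agent_data
   \<Rightarrow> ('p \<Rightarrow> real) \<Rightarrow> nat \<Rightarrow> nat
   \<Rightarrow> 'x \<Rightarrow> 'p \<Rightarrow> real \<Rightarrow> real \<Rightarrow> ('x, 'u) mpc_sol \<Rightarrow> bool" where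
  "feasible A h Nn Nc x c R Jhat s \<longleftrightarrow>
     s_xn s 0 = x \<and>
     s_un s 0 = s_uc s 0 \<and>
     (\<forall>k<Nn. s_xn s (Suc k) = ag_f A (s_xn s k) (s_un s k) \<and>
             s_xn s (Suc k) \<in> ag_X A \<and> s_un s k \<in> ag_U A) \<and>
     s_xc s 0 = x \<and>
     (\<forall>k<Nc. s_xc s (Suc k) = ag_f A (s_xc s k) (s_uc s k)) \<and>
     (\<forall>k<Nc. s_xc s (Suc k) \<in> ag_X A \<and> s_uc s k \<in> ag_U A) \<and>
     (\<forall>k\<le>Nc. 0 \<le> h (ag_C A (s_xc s k))) \<and>
     s_xc s Nc = s_xb s \<and> s_xb s = ag_f A (s_xb s) (s_ub s) \<and>
       s_xb s \<in> ag_X A \<and> s_ub s \<in> ag_U A \<and>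
     ag_C A (s_xb s) \<in> cball c R \<and>
     (\<forall>k\<le>Nc. norm (ag_C A (s_xc s k) - c) \<le> R - ag_r A) \<and>
     (\<forall>k l. k \<le> l \<and> l \<le> Nc \<longrightarrow>
        norm (ag_C A (s_xc s l) - ag_Gc A (s_xc s k)) \<le> ag_GR A (s_xc s k) - ag_r A) \<and>
     Jc_cost A Nc s \<le> Jhat"

definition optimal ::
  "('x::real_normed_vector, 'u::real_normed_vector, 'p::real_normed_vector) agent_data
   \<Rightarrow> ('p \<Rightarrow> real) \<Rightarrow> nat \<Rightarrow> nat \<Rightarrow> real
   \<Rightarrow> 'x \<Rightarrow> 'p \<Rightarrow> real \<Rightarrow> real \<Rightarrow> ('x, 'u) mpc_sol \<Rightarrow> bool" where
  "optimal A h Nn Nc \<gamma> x c R Jhat s \<longleftrightarrow>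
     feasible A h Nn Nc x c R Jhat s \<and>
     (\<forall>s'. feasible A h Nn Nc x c R Jhat s' \<longrightarrow> J_cost A Nn \<gamma> s \<le> J_cost A Nn \<gamma> s')"

definition fos_conflict ::
  "nat \<Rightarrow> (nat \<Rightarrow> ('x, 'u, 'p::metric_space) agent_data) \<Rightarrow> (nat \<Rightarrow> nat \<Rightarrow> 'x)
   \<Rightarrow> (nat \<Rightarrow> nat \<Rightarrow> 'p) \<Rightarrow> (nat \<Rightarrow> nat \<Rightarrow> real) \<Rightarrow> nat \<Rightarrow> nat \<Rightarrow> bool" where
  "fos_conflict M ag x Sc SR j t \<longleftrightarrow>
     (\<exists>k\<in>{1..M}. k \<noteq> j \<and>
        (cball (ag_Gc (ag j) (x j (Suc t))) (ag_GR (ag j) (x j (Suc t)))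
           \<inter> cball (ag_Gc (ag k) (x k (Suc t))) (ag_GR (ag k) (x k (Suc t))) \<noteq> {} \<or>
         cball (ag_Gc (ag j) (x j (Suc t))) (ag_GR (ag j) (x j (Suc t)))
           \<inter> cball (Sc k t) (SR k t) \<noteq> {}))"

text \<open>The closed loop: x j t state, sol j t the optimal solution of P_j(t), Jh j t the bound,
  cball (Sc j t) (SR j t) the active safe set S*_j(t).\<close>
definition closed_loop ::
  "nat \<Rightarrow> (nat \<Rightarrow> ('x::real_normed_vector, 'u::real_normed_vector, 'p::real_normed_vector) agent_data)
   \<Rightarrow> ('p \<Rightarrow> real) \<Rightarrow> nat \<Rightarrow> nat \<Rightarrow> real
   \<Rightarrow> (nat \<Rightarrow> nat \<Rightarrow> 'x) \<Rightarrow> (nat \<Rightarrow> nat \<Rightarrow> ('x, 'u) mpc_sol) \<Rightarrow> (nat \<Rightarrow> nat \<Rightarrow> real)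
   \<Rightarrow> (nat \<Rightarrow> nat \<Rightarrow> 'p) \<Rightarrow> (nat \<Rightarrow> nat \<Rightarrow> real) \<Rightarrow> bool" where
  "closed_loop M ag h Nn Nc \<gamma> x sol Jh Sc SR \<longleftrightarrow>
     (\<forall>j\<in>{1..M}. 0 \<le> Jh j 0 \<and>
       (\<forall>t. optimal (ag j) h Nn Nc \<gamma> (x j t) (Sc j t) (SR j t) (Jh j t) (sol j t) \<and>
            x j (Suc t) = ag_f (ag j) (x j t) (s_uc (sol j t) 0) \<and>
            Jh j (Suc t) = Jc_cost (ag j) Nc (sol j t)
               - ag_lc (ag j) (x j t - s_xb (sol j t)) (s_uc (sol j t) 0 - s_ub (sol j t)) \<and>
            (Sc j (Suc t), SR j (Suc t)) =
              (if fos_conflict M ag x Sc SR j t then (Sc j t, SR j t)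
               else (ag_Gc (ag j) (x j (Suc t)), ag_GR (ag j) (x j (Suc t))))))"

end

theory Submission
  imports Defs
begin

text \<open>The bound \<open>Jh i t\<close> drops by at least the applied contingency stage cost at every
  step and stays nonnegative, since the contingency cost dominates its own first stage cost.
  A nonincreasing sequence bounded below converges, so the applied stage costs tend to zero, and
  the lower class-K-infinity bound turns this into convergence of the offsets from the
  eventually constant contingency equilibrium.\<close>

lemma tendsto_zero_if_le_decrements:
  fixes J L :: "nat \<Rightarrow> real"
  assumes "bdd_below (range J)"
    and "\<And>t. 0 \<le> L t" and "\<And>t. L t \<le> J t - J (Suc t)"
  shows "L \<longlonglongrightarrow> 0"
proof -
  have "decseq J"
    unfolding decseq_Suc_iff using assms(2,3) by (meson diff_ge_0_iff_ge order_trans)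
  moreover obtain B where "\<forall>t. B \<le> J t"
    using assms(1) by (auto simp: bdd_below_def)
  ultimately obtain Jlim where J_lim: "J \<longlonglongrightarrow> Jlim"
    using decseq_convergent by blast
  have "(\<lambda>t. J t - J (Suc t)) \<longlonglongrightarrow> Jlim - Jlim"
    using J_lim LIMSEQ_Suc[OF J_lim] by (rule tendsto_diff)
  then show ?thesis
    by (intro tendsto_sandwich[of "\<lambda>_. 0" L _ "\<lambda>t. J t - J (Suc t)"]) (use assms in auto)
qed

lemma tendsto_zero_if_strict_mono_bounded:
  fixes \<alpha> :: "real \<Rightarrow> real" and n L :: "'a \<Rightarrow> real"
  assumes mono: "strict_mono_on {0..} \<alpha>" and "\<alpha> 0 = 0"
    and "(L \<longlongrightarrow> 0) F"
    and "\<forall>\<^sub>F t in F. \<alpha> (n t) \<le> L t" and "\<forall>\<^sub>F t in F. 0 \<le> n t"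
  shows "(n \<longlongrightarrow> 0) F"
proof (rule tendstoI)
  fix r :: real
  assume "0 < r"
  then have "0 < \<alpha> r"
    using strict_mono_on_less[OF mono, of 0 r] \<open>\<alpha> 0 = 0\<close> by simp
  then have "\<forall>\<^sub>F t in F. L t < \<alpha> r"
    by (rule order_tendstoD(2)[OF \<open>(L \<longlongrightarrow> 0) F\<close>])
  then show "\<forall>\<^sub>F t in F. dist (n t) 0 < r"
    using assms(4,5)
  proof eventually_elim
    case (elim t)
    then have "\<alpha> (n t) < \<alpha> r" by linarith
    then show ?case
      using strict_mono_on_less[OF mono, of "n t" r] \<open>0 < r\<close> elim by simp
  qed
qed

lemma Jc_cost_ge_initial_stage_cost:
  assumes "0 < Nc" and "\<forall>e v. 0 \<le> ag_lc A e v" and "\<forall>a b. 0 \<le> ag_Vc A a b"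
  shows "ag_lc A (s_xc s 0 - s_xb s) (s_uc s 0 - s_ub s) \<le> Jc_cost A Nc s"
proof -
  have "ag_lc A (s_xc s 0 - s_xb s) (s_uc s 0 - s_ub s)
      \<le> (\<Sum>k<Nc. ag_lc A (s_xc s k - s_xb s) (s_uc s k - s_ub s))"
    by (rule member_le_sum) (use assms in auto)
  also have "\<dots> \<le> Jc_cost A Nc s"
    unfolding Jc_cost_def using assms(3) by simp
  finally show ?thesis .
qed

context
  fixes M ag h Nn Nc \<gamma> x sol Jh Sc SR i
  assumes standing: "standing_assumptions M ag h Nn Nc \<gamma>"
    and loop: "closed_loop M ag h Nn Nc \<gamma> x sol Jh Sc SR"
    and agent: "i \<in> {1..M}"
begin

private lemma closed_loop_step:
  "feasible (ag i) h Nn Nc (x i t) (Sc i t) (SR i t) (Jh i t) (sol i t)"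
  "Jh i (Suc t) = Jc_cost (ag i) Nc (sol i t)
     - ag_lc (ag i) (x i t - s_xb (sol i t)) (s_uc (sol i t) 0 - s_ub (sol i t))"
  using loop agent unfolding closed_loop_def optimal_def by blast+

lemma closed_loop_stage_cost_le_bound_decrease:
  "ag_lc (ag i) (x i t - s_xb (sol i t)) (s_uc (sol i t) 0 - s_ub (sol i t))
     \<le> Jh i t - Jh i (Suc t)"
  using closed_loop_step[of t] unfolding feasible_def by simp

lemma closed_loop_bound_nonneg: "0 \<le> Jh i t"
proof (cases t)
  case 0
  then show ?thesis using loop agent unfolding closed_loop_def by blast
next
  case (Suc t')
  have "s_xc (sol i t') 0 = x i t'"
    using closed_loop_step(1)[of t'] unfolding feasible_def by blast
  moreover have "0 < Nc" "\<forall>e v. 0 \<le> ag_lc (ag i) e v" "\<forall>a b. 0 \<le> ag_Vc (ag i) a b"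
    using standing agent unfolding standing_assumptions_def by auto
  ultimately show ?thesis
    using Jc_cost_ge_initial_stage_cost[of Nc "ag i" "sol i t'"] closed_loop_step(2)[of t'] Suc
    by simp
qed

lemma closed_loop_stage_cost_tendsto_zero:
  "(\<lambda>t. ag_lc (ag i) (x i t - s_xb (sol i t)) (s_uc (sol i t) 0 - s_ub (sol i t)))
     \<longlonglongrightarrow> 0"
proof (rule tendsto_zero_if_le_decrements)
  show "bdd_below (range (Jh i))"
    using closed_loop_bound_nonneg by (intro bdd_belowI) auto
  show "0 \<le> ag_lc (ag i) (x i t - s_xb (sol i t)) (s_uc (sol i t) 0 - s_ub (sol i t))" for t
    using standing agent unfolding standing_assumptions_def by auto
qed (rule closed_loop_stage_cost_le_bound_decrease)

end

theorem corollary2: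
  fixes M :: nat
    and ag :: "nat \<Rightarrow> ('x::euclidean_space, 'u::euclidean_space, 'p::euclidean_space) agent_data"
    and h :: "'p \<Rightarrow> real" and Nn Nc :: nat and \<gamma> :: real
    and x :: "nat \<Rightarrow> nat \<Rightarrow> 'x" and sol :: "nat \<Rightarrow> nat \<Rightarrow> ('x, 'u) mpc_sol"
    and Jh :: "nat \<Rightarrow> nat \<Rightarrow> real" and Sc :: "nat \<Rightarrow> nat \<Rightarrow> 'p" and SR :: "nat \<Rightarrow> nat \<Rightarrow> real"
    and i :: nat and \<alpha>l \<alpha>u :: "real \<Rightarrow> real" and tbar :: nat and xs :: 'x and us :: 'u
  assumes "standing_assumptions M ag h Nn Nc \<gamma>"
    and "closed_loop M ag h Nn Nc \<gamma> x sol Jh Sc SR"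
    and "i \<in> {1..M}"
    and "continuous_on UNIV (\<lambda>z. ag_lc (ag i) (fst z) (snd z))"
    and "class_Kinf \<alpha>l" and "class_Kinf \<alpha>u"
    and "\<forall>e du. \<alpha>l (norm (e, du)) \<le> ag_lc (ag i) e du \<and> ag_lc (ag i) e du \<le> \<alpha>u (norm (e, du))"
    and "\<forall>a b. 0 \<le> ag_Vc (ag i) a b"
    and "\<forall>t\<ge>tbar. s_xb (sol i t) = xs \<and> s_ub (sol i t) = us"
  shows "(\<lambda>t. x i t) \<longlonglongrightarrow> xs \<and> (\<lambda>t. s_uc (sol i t) 0) \<longlonglongrightarrow> us"
proof -
  define e where "e t = x i t - s_xb (sol i t)" for t
  define d where "d t = s_uc (sol i t) 0 - s_ub (sol i t)" for t
  have "(\<lambda>t. norm (e t, d t)) \<longlonglongrightarrow> 0"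
  proof (rule tendsto_zero_if_strict_mono_bounded)
    show "strict_mono_on {0..} \<alpha>l" "\<alpha>l 0 = 0"
      using assms(5) unfolding class_Kinf_def by auto
    show "(\<lambda>t. ag_lc (ag i) (e t) (d t)) \<longlonglongrightarrow> 0"
      unfolding e_def d_def by (rule closed_loop_stage_cost_tendsto_zero[OF assms(1-3)])
  qed (use assms(7) in auto)
  then have "(\<lambda>t. (e t, d t)) \<longlonglongrightarrow> 0"
    by (rule tendsto_norm_zero_iff[THEN iffD1])
  then have "e \<longlonglongrightarrow> 0" "d \<longlonglongrightarrow> 0"
    using tendsto_fst tendsto_snd by fastforce+
  moreover have "\<forall>\<^sub>F t in sequentially. e t = x i t - xs \<and> d t = s_uc (sol i t) 0 - us"
    using assms(9) unfolding e_def d_def eventually_sequentially by auto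
  ultimately have "(\<lambda>t. x i t - xs) \<longlonglongrightarrow> 0" "(\<lambda>t. s_uc (sol i t) 0 - us) \<longlonglongrightarrow> 0"
    by (auto elim!: Lim_transform_eventually elim: eventually_mono)
  then show ?thesis by (simp add: LIM_zero_cancel)
qed

end
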